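(* Let $p,q$ be distinct primes and $N=p+q$. Let $M=(m_{ik})_{i,k\in\mathbb Z/N\mathbb Z}$ be an $N\times N$ matrix with entries in $\mathbb Z/pq\mathbb Z$ such that $(e^{2\pi i\,m_{ik}/pq})$ is a complex Hadamard matrix. For $i\in\mathbb Z/N\mathbb Z$ let $L_i(k)=m_{ik}$ and for $i,j$ let $L_{ij}=L_j-L_i:\mathbb Z/N\mathbb Z\to\mathbb Z/pq\mathbb Z$. Then for all distinct $i,j\in\mathbb Z/N\mathbb Z$ there exist a partition $\mathbb Z/N\mathbb Z=P_{ij}\sqcup Q_{ij}\sqcup R_{ij}$ and $r\in\mathbb Z/pq\mathbb Z$ such that: (i) $\#R_{ij}=2$ and $L_{ij}(k)=r$ for all $k\in R_{ij}$; (ii) $\#P_{ij}=p-1$ and $\{L_{ij}(k):k\in P_{ij}\}=(r+q(\mathbb Z/pq\mathbb Z))\setminus\{r\}$; (iii) $\#Q_{ij}=q-1$ and $\{L_{ij}(k):k\in Q_{ij}\}=(r+p(\mathbb Z/pq\mathbb Z))\setminus\{r\}$.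
   Context: A complex Hadamard matrix has all entries of modulus one and pairwise orthogonal rows. For $d\mid pq$, $d(\mathbb Z/pq\mathbb Z)$ denotes the subgroup of multiples of $d$ in $\mathbb Z/pq\mathbb Z$ (so $q(\mathbb Z/pq\mathbb Z)$ has $p$ elements and $p(\mathbb Z/pq\mathbb Z)$ has $q$ elements). *)

theory Defs
  imports "HOL-Analysis.Analysis"
begin

text \<open>Matrices indexed by {..<N} x {..<N} (i.e. Z/NZ via representatives), with
entries in Z/nZ represented by integers in {0..<n}.\<close>

definition zmod_matrix :: "nat \<Rightarrow> nat \<Rightarrow> (nat \<Rightarrow> nat \<Rightarrow> int) \<Rightarrow> bool" where
  "zmod_matrix N n m \<longleftrightarrow> (\<forall>i<N. \<forall>k<N. m i k \<in> {0..<int n})"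

definition exp_matrix :: "nat \<Rightarrow> (nat \<Rightarrow> nat \<Rightarrow> int) \<Rightarrow> nat \<Rightarrow> nat \<Rightarrow> complex" where
  "exp_matrix n m i k = exp (2 * of_real pi * \<i> * of_int (m i k) / of_nat n)"

definition complex_hadamard :: "nat \<Rightarrow> (nat \<Rightarrow> nat \<Rightarrow> complex) \<Rightarrow> bool" where
  "complex_hadamard N H \<longleftrightarrow>
     (\<forall>i<N. \<forall>k<N. norm (H i k) = 1) \<and>
     (\<forall>i<N. \<forall>j<N. i \<noteq> j \<longrightarrow> (\<Sum>k<N. H i k * cnj (H j k)) = 0)"

definition Ldiff :: "nat \<Rightarrow> (nat \<Rightarrow> nat \<Rightarrow> int) \<Rightarrow> nat \<Rightarrow> nat \<Rightarrow> nat \<Rightarrow> int" where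
  "Ldiff n m i j k = (m j k - m i k) mod int n"

definition coset_mult :: "nat \<Rightarrow> nat \<Rightarrow> int \<Rightarrow> int set" where
  "coset_mult n d r = {(r + int d * t) mod int n | t. t \<in> (UNIV :: int set)}"

end

theory Submission
  imports Defs "Jordan_Normal_Form.Char_Poly" "HOL-Computational_Algebra.Polynomial_Factorial"
    "HOL-Number_Theory.Cong"
begin

text \<open>Fix rows \<open>i \<noteq> j\<close> and let \<open>w = exp(-2\<pi>i/pq)\<close>. Orthogonality of the rows says
  \<open>\<Sum>\<^sub>k w\<^bsup>L(k)\<^esup> = 0\<close> for \<open>L = L\<^sub>i\<^sub>j\<close>, so the integer polynomial \<open>\<Sum>\<^sub>k x\<^bsup>L(k)\<^esup>\<close> vanishes at \<open>w\<close> and,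
  by irreducibility of the cyclotomic polynomials (Landau's argument via Frobenius in \<open>\<int>[w]\<close>),
  at every primitive root \<open>w\<^sup>t\<close>. Weighting these sums by \<open>w\<^bsup>-tb\<^esup>\<close> and summing over the units \<open>t\<close>
  gives Ramanujan sums, whence for every residue \<open>b\<close>
  \<open>pq\<cdot>#L\<^sup>-\<^sup>1(b) + p + q = q\<cdot>#{k. L(k) \<equiv> b (q)} + p\<cdot>#{k. L(k) \<equiv> b (p)}\<close>.
  Reduced mod \<open>p\<close>, this forces each class mod \<open>q\<close> to contain exactly one value of \<open>L\<close>, except one
  class containing \<open>p + 1\<close> values, and symmetrically mod \<open>p\<close>. So
  \<open>#L\<^sup>-\<^sup>1(b) = [b \<equiv> r (q)] + [b \<equiv> r (p)]\<close> for the Chinese remainder point \<open>r\<close> of the two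
  exceptional classes.\<close>

section \<open>The ring \<open>\<int>[z]\<close> for a root of unity \<open>z\<close>\<close>

definition int_adjoin :: "complex \<Rightarrow> complex set" where
  "int_adjoin z = (\<lambda>G. poly (of_int_poly G) z) ` UNIV"

lemma int_adjoin_of_int [simp, intro]: "of_int c \<in> int_adjoin z"
  unfolding int_adjoin_def by (rule image_eqI[of _ _ "[:c:]"]) (auto simp: hom_distribs)

lemma int_adjoin_self [simp, intro]: "z \<in> int_adjoin z"
  unfolding int_adjoin_def by (rule image_eqI[of _ _ "[:0, 1:]"]) auto

lemma int_adjoin_add [intro]: "x \<in> int_adjoin z \<Longrightarrow> y \<in> int_adjoin z \<Longrightarrow> x + y \<in> int_adjoin z"
  unfolding int_adjoin_def by (clarsimp, rule image_eqI[of _ _ "_ + _"]) (auto simp: hom_distribs)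

lemma int_adjoin_diff [intro]: "x \<in> int_adjoin z \<Longrightarrow> y \<in> int_adjoin z \<Longrightarrow> x - y \<in> int_adjoin z"
  unfolding int_adjoin_def by (clarsimp, rule image_eqI[of _ _ "_ - _"]) (auto simp: hom_distribs)

lemma int_adjoin_mult [intro]: "x \<in> int_adjoin z \<Longrightarrow> y \<in> int_adjoin z \<Longrightarrow> x * y \<in> int_adjoin z"
  unfolding int_adjoin_def by (clarsimp, rule image_eqI[of _ _ "_ * _"]) (auto simp: hom_distribs)

lemma int_adjoin_of_nat [simp, intro]: "of_nat c \<in> int_adjoin z"
  using int_adjoin_of_int[of "int c" z] by simp

lemma int_adjoin_0 [simp, intro]: "0 \<in> int_adjoin z"
  and int_adjoin_1 [simp, intro]: "1 \<in> int_adjoin z"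
  using int_adjoin_of_int[of 0 z] int_adjoin_of_int[of 1 z] by simp_all

lemma int_adjoin_power [intro]: "x \<in> int_adjoin z \<Longrightarrow> x ^ k \<in> int_adjoin z"
  by (induct k) auto

lemma int_adjoin_sum [intro]: "(\<And>i. i \<in> A \<Longrightarrow> f i \<in> int_adjoin z) \<Longrightarrow> sum f A \<in> int_adjoin z"
  by (induct A rule: infinite_finite_induct) auto

lemma int_adjoin_poly [intro]: "x \<in> int_adjoin z \<Longrightarrow> poly (of_int_poly G) x \<in> int_adjoin z"
  by (induct G) (auto simp: hom_distribs)

text \<open>Multiplication by \<open>x\<close> acts on the spanning family \<open>1, z, \<dots>, z\<^sup>n\<^sup>-\<^sup>1\<close> by an integer matrix.\<close>
lemma int_adjoin_root_unity_eigenvalue: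
  assumes zn: "z ^ n = 1" and n: "n > 0" and x: "x \<in> int_adjoin z"
  obtains C :: "int mat" where "C \<in> carrier_mat n n" and "eigenvalue (map_mat of_int C) x"
proof -
  from x obtain G where xG: "x = poly (of_int_poly G) z" unfolding int_adjoin_def by auto
  define d where "d = degree G"
  define C :: "int mat" where
    "C = mat n n (\<lambda>(b,a). \<Sum>j\<in>{j. j \<le> d \<and> (j + b) mod n = a}. poly.coeff G j)"
  define v :: "complex vec" where "v = vec n (\<lambda>b. z ^ b)"
  have zmod: "z ^ (k mod n) = z ^ k" for k
  proof -
    have "z ^ k = (z ^ n) ^ (k div n) * z ^ (k mod n)"
      by (metis mod_div_mult_eq mult.commute power_add power_mult)
    thus ?thesis using zn by simp
  qed
  have Cc: "C \<in> carrier_mat n n" unfolding C_def by simp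
  have "map_mat of_int C *\<^sub>v v = x \<cdot>\<^sub>v v"
  proof (rule eq_vecI)
    fix b assume "b < dim_vec (x \<cdot>\<^sub>v v)"
    hence b: "b < n" by (simp add: v_def)
    have "(map_mat of_int C *\<^sub>v v) $ b = (\<Sum>a<n. of_int (C $$ (b,a)) * z ^ a)"
      using b by (simp add: v_def C_def mult_mat_vec_def scalar_prod_def lessThan_atLeast0)
    also have "\<dots> = (\<Sum>a<n. \<Sum>j\<in>{j\<in>{..d}. (j + b) mod n = a}.
                      of_int (poly.coeff G j) * z ^ ((j + b) mod n))"
      using b by (auto simp: C_def sum_distrib_right intro!: sum.cong)
    also have "\<dots> = (\<Sum>j\<in>{..d}. of_int (poly.coeff G j) * z ^ ((j + b) mod n))"
      by (rule sum.group) (auto simp: n)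
    also have "\<dots> = (\<Sum>j\<in>{..d}. of_int (poly.coeff G j) * z ^ j) * z ^ b"
      by (simp add: zmod sum_distrib_right power_add mult.assoc)
    also have "(\<Sum>j\<in>{..d}. of_int (poly.coeff G j) * z ^ j) = x"
      unfolding xG poly_altdef d_def by simp
    finally show "(map_mat of_int C *\<^sub>v v) $ b = (x \<cdot>\<^sub>v v) $ b"
      using b by (simp add: v_def)
  qed (simp add: v_def C_def)
  moreover have "v $ 0 \<noteq> 0\<^sub>v n $ 0"
    using n by (simp add: v_def)
  hence "v \<noteq> 0\<^sub>v n" by metis
  ultimately have "eigenvalue (map_mat of_int C) x"
    unfolding eigenvalue_def eigenvector_def using Cc by (intro exI[of _ v]) (auto simp: v_def)
  with Cc show ?thesis by (rule that)
qed

lemma int_adjoin_root_unity_algebraic_int: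
  assumes "z ^ n = 1" and "n > 0" and "x \<in> int_adjoin z"
  shows "algebraic_int x"
proof -
  obtain C :: "int mat" where C: "C \<in> carrier_mat n n" and "eigenvalue (map_mat of_int C) x"
    using int_adjoin_root_unity_eigenvalue[OF assms] .
  hence "poly (char_poly (map_mat of_int C)) x = 0"
    using eigenvalue_root_char_poly[of "map_mat of_int C" n x] by simp
  hence "poly (of_int_poly (char_poly C)) x = 0"
    using of_int_hom.char_poly_hom[OF C] by metis
  moreover have "monic (char_poly C)" using degree_monic_char_poly[OF C] by simp
  ultimately show ?thesis using algebraic_int_altdef_ipoly by blast
qed

section \<open>Conjugates of a root of unity\<close>

definition dvd_in_adjoin :: "nat \<Rightarrow> complex \<Rightarrow> complex \<Rightarrow> bool" where
  "dvd_in_adjoin l z a \<longleftrightarrow> (\<exists>r\<in>int_adjoin z. a = of_nat l * r)"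

lemma dvd_in_adjoin_0 [simp]: "dvd_in_adjoin l z 0"
  unfolding dvd_in_adjoin_def by (auto intro!: bexI[of _ 0])

lemma dvd_in_adjoin_add: "dvd_in_adjoin l z a \<Longrightarrow> dvd_in_adjoin l z b \<Longrightarrow> dvd_in_adjoin l z (a + b)"
  unfolding dvd_in_adjoin_def by (auto intro!: bexI[of _ "_ + _"] simp: distrib_left)

lemma dvd_in_adjoin_diff: "dvd_in_adjoin l z a \<Longrightarrow> dvd_in_adjoin l z b \<Longrightarrow> dvd_in_adjoin l z (a - b)"
  unfolding dvd_in_adjoin_def by (auto intro!: bexI[of _ "_ - _"] simp: right_diff_distrib)

lemma dvd_in_adjoin_mult: "dvd_in_adjoin l z a \<Longrightarrow> b \<in> int_adjoin z \<Longrightarrow> dvd_in_adjoin l z (b * a)"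
  unfolding dvd_in_adjoin_def by (auto intro!: bexI[of _ "b * _"] simp: mult.left_commute)

lemma dvd_in_adjoin_add_power_prime:
  assumes l: "prime l" and a: "a \<in> int_adjoin z" and b: "b \<in> int_adjoin z"
  shows "dvd_in_adjoin l z ((a + b) ^ l - a ^ l - b ^ l)"
proof -
  define r where "r = (\<Sum>k\<in>{1..<l}. of_nat ((l choose k) div l) * a ^ k * b ^ (l - k))"
  have "of_nat (l choose k) = (of_nat l * of_nat ((l choose k) div l) :: complex)" if "k \<in> {1..<l}" for k
    using dvd_choose_prime[of k l] l that by (simp flip: of_nat_mult)
  hence "(\<Sum>k\<in>{1..<l}. of_nat (l choose k) * a ^ k * b ^ (l - k)) = of_nat l * r"
    unfolding r_def sum_distrib_left by (intro sum.cong) (simp_all add: mult.assoc)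
  moreover have "(a + b) ^ l = a ^ l + b ^ l + (\<Sum>k\<in>{1..<l}. of_nat (l choose k) * a ^ k * b ^ (l - k))"
  proof -
    have l1: "{..l} = insert 0 (insert l {1..<l})" using prime_gt_0_nat[OF l] by auto
    show ?thesis unfolding binomial_ring l1 using prime_gt_0_nat[OF l] by simp
  qed
  moreover have "r \<in> int_adjoin z" unfolding r_def using a b by (intro int_adjoin_sum int_adjoin_mult int_adjoin_power) auto
  ultimately show ?thesis unfolding dvd_in_adjoin_def by auto
qed

lemma dvd_in_adjoin_of_int_power_prime:
  assumes l: "prime l"
  shows "dvd_in_adjoin l z ((of_int c) ^ l - of_int c)"
proof (induct c rule: int_induct[where k = 0])
  case base thus ?case using l by (simp add: zero_power prime_gt_0_nat)
next
  case (step1 i)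
  have "dvd_in_adjoin l z ((of_int i + 1) ^ l - of_int i ^ l - 1 ^ l)"
    by (rule dvd_in_adjoin_add_power_prime[OF l]) auto
  from dvd_in_adjoin_add[OF this step1(2)] show ?case by (simp add: algebra_simps)
next
  case (step2 i)
  have "dvd_in_adjoin l z ((of_int (i - 1) + 1) ^ l - of_int (i - 1) ^ l - 1 ^ l)"
    by (rule dvd_in_adjoin_add_power_prime[OF l]) auto
  from dvd_in_adjoin_diff[OF step2(2) this] show ?case by (simp add: algebra_simps)
qed

lemma dvd_in_adjoin_poly_power_prime:
  assumes l: "prime l" and x: "x \<in> int_adjoin z"
  shows "dvd_in_adjoin l z (poly (of_int_poly G) (x ^ l) - (poly (of_int_poly G) x) ^ l)"
proof (induct G)
  case 0 thus ?case using l by (simp add: zero_power prime_gt_0_nat)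
next
  case (pCons c G)
  let ?g = "poly (of_int_poly G)"
  have "dvd_in_adjoin l z ((of_int c + x * ?g x) ^ l - of_int c ^ l - (x * ?g x) ^ l)"
    by (rule dvd_in_adjoin_add_power_prime[OF l]) (use x in auto)
  moreover have "dvd_in_adjoin l z (of_int c ^ l - of_int c)"
    by (rule dvd_in_adjoin_of_int_power_prime[OF l])
  moreover have "dvd_in_adjoin l z (x ^ l * (?g (x ^ l) - ?g x ^ l))"
    by (rule dvd_in_adjoin_mult[OF pCons(2)]) (use x in auto)
  ultimately have "dvd_in_adjoin l z (x ^ l * (?g (x ^ l) - ?g x ^ l)
      - ((of_int c + x * ?g x) ^ l - of_int c ^ l - (x * ?g x) ^ l) - (of_int c ^ l - of_int c))"
    by (blast intro: dvd_in_adjoin_diff)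
  thus ?case by (simp add: hom_distribs algebra_simps power_mult_distrib)
qed

lemma dvd_in_adjoin_of_nat_imp_dvd:
  assumes "z ^ n = 1" and "n > 0" and "l > 0" and "dvd_in_adjoin l z (of_nat a)"
  shows "l dvd a"
proof -
  obtain r where r: "r \<in> int_adjoin z" "of_nat a = of_nat l * r"
    using assms(4) unfolding dvd_in_adjoin_def by blast
  hence "r = of_nat a / of_nat l" using \<open>l > 0\<close> by simp
  hence "r \<in> \<rat>" by simp
  hence "r \<in> \<int>"
    using rational_algebraic_int_is_int int_adjoin_root_unity_algebraic_int[OF assms(1,2) r(1)] by blast
  then obtain t where "r = of_int t" by (elim Ints_cases)
  hence "int a = int l * t" using r(2) by (metis of_int_eq_iff of_int_mult of_int_of_nat_eq)
  thus "l dvd a" by (metis dvd_triv_left int_dvd_int_iff)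
qed

lemma int_poly_annihilator_generator:
  fixes z :: complex and P :: "int poly"
  assumes "P \<noteq> 0" and "poly (of_int_poly P) z = 0"
  obtains f :: "int poly" where "poly (of_int_poly f) z = 0"
    and "\<And>G. poly (of_int_poly G) z = 0 \<Longrightarrow> f dvd G"
proof -
  define ann where "ann G \<longleftrightarrow> G \<noteq> 0 \<and> poly (of_int_poly G) z = 0" for G :: "int poly"
  obtain g where "ann g" and g_min: "\<And>G. ann G \<Longrightarrow> degree g \<le> degree G"
    using ex_has_least_nat[of ann P degree] assms unfolding ann_def by blast
  define f where "f = primitive_part g"
  have "poly (of_int_poly g) z = of_int (content g) * poly (of_int_poly f) z"
    unfolding f_def by (subst content_times_primitive_part[symmetric, of g])
      (simp add: hom_distribs del: content_times_primitive_part)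
  hence f_root: "poly (of_int_poly f) z = 0" using \<open>ann g\<close> by (auto simp: ann_def)
  have "f \<noteq> 0" and "content f = 1" and "degree f = degree g"
    using \<open>ann g\<close> by (simp_all add: f_def ann_def)
  have "f dvd G" if G_root: "poly (of_int_poly G) z = 0" for G
  proof -
    obtain s r where sr: "pseudo_divmod G f = (s, r)" by (cases "pseudo_divmod G f")
    define c where "c = lead_coeff f ^ (Suc (degree G) - degree f)"
    have eq: "Polynomial.smult c G = f * s + r" and "r = 0 \<or> degree r < degree f"
      using pseudo_divmod[OF \<open>f \<noteq> 0\<close> sr] by (simp_all add: c_def)
    have "poly (of_int_poly r) z = 0"
      using arg_cong[OF eq, of "\<lambda>h. poly (of_int_poly h) z"] G_root f_root
      by (simp add: hom_distribs)
    have "r = 0"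
    proof (rule ccontr)
      assume "r \<noteq> 0"
      with \<open>poly (of_int_poly r) z = 0\<close> have "degree g \<le> degree r"
        by (intro g_min) (simp add: ann_def)
      with \<open>r = 0 \<or> degree r < degree f\<close> \<open>r \<noteq> 0\<close> \<open>degree f = degree g\<close> show False
        by simp
    qed
    hence "fract_poly f dvd Polynomial.smult (to_fract c) (fract_poly G)"
      using eq by (metis add_0_right dvd_triv_left fract_poly_mult fract_poly_smult)
    hence "fract_poly f dvd fract_poly G"
      by (rule dvd_smult_cancel) (simp add: c_def \<open>f \<noteq> 0\<close>)
    thus ?thesis using \<open>content f = 1\<close> by (rule fract_poly_dvdD)
  qed
  with f_root show ?thesis by (rule that)
qed

lemma poly_pderiv_root_unity_factor:
  fixes f g :: "complex poly"
  assumes fg: "Polynomial.monom 1 n - 1 = f * g" and g: "poly g w = 0" and w: "w ^ n = 1" and n: "n > 0"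
  shows "of_nat n = poly f w * poly (pderiv g) w * w"
proof -
  have "of_nat n * w ^ (n - 1) = poly (pderiv (Polynomial.monom 1 n - 1)) w"
    by (simp add: pderiv_monom pderiv_diff poly_monom)
  also have "\<dots> = poly f w * poly (pderiv g) w"
    unfolding fg pderiv_mult using g by simp
  finally have deriv: "of_nat n * w ^ (n - 1) = poly f w * poly (pderiv g) w" .
  have "w ^ (n - 1) * w = 1" using w n by (metis Suc_diff_1 power_Suc2)
  hence "of_nat n = of_nat n * w ^ (n - 1) * w" by (simp add: mult.assoc)
  thus ?thesis unfolding deriv .
qed

text \<open>Landau's proof of the irreducibility of cyclotomic polynomials: the generator \<open>f\<close> of the
  annihilator of \<open>z\<close> divides \<open>x\<^sup>n - 1\<close>, which is separable in characteristic \<open>l\<close>, and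
  \<open>f(z\<^sup>l) \<equiv> f(z)\<^sup>l = 0\<close> modulo \<open>l\<close>.\<close>
lemma int_poly_root_unity_power_prime:
  fixes z :: complex
  assumes zn: "z ^ n = 1" and n: "n > 0" and l: "prime l" "\<not> l dvd n"
    and F: "poly (of_int_poly F) z = 0"
  shows "poly (of_int_poly F) (z ^ l) = 0"
proof -
  define P :: "int poly" where "P = Polynomial.monom 1 n - 1"
  have P_root: "poly (of_int_poly P) x = 0" if "x ^ n = 1" for x :: complex
    using that by (simp add: P_def hom_distribs poly_monom)
  have "poly.coeff P n = 1" using n by (simp add: P_def)
  hence "P \<noteq> 0" by auto
  obtain f where f_root: "poly (of_int_poly f) z = 0"
    and f_dvd: "\<And>G. poly (of_int_poly G) z = 0 \<Longrightarrow> f dvd G"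
    using int_poly_annihilator_generator[OF \<open>P \<noteq> 0\<close> P_root[OF zn]] by blast
  obtain g where Pfg: "P = f * g" using f_dvd[OF P_root[OF zn]] by (elim dvdE)
  define w where "w = z ^ l"
  have wn: "w ^ n = 1" unfolding w_def using zn by (metis mult.commute power_mult power_one)
  have "poly (of_int_poly f) w = 0"
  proof (rule ccontr)
    assume fw: "poly (of_int_poly f) w \<noteq> 0"
    have Pfg_c: "Polynomial.monom 1 n - 1 = of_int_poly f * (of_int_poly g :: complex poly)"
    proof -
      have "of_int_poly P = (of_int_poly f * of_int_poly g :: complex poly)"
        by (simp add: Pfg hom_distribs)
      thus ?thesis by (simp add: P_def hom_distribs map_poly_monom)
    qed
    hence "poly (of_int_poly g) w = 0"
      using P_root[OF wn] fw by (simp add: P_def hom_distribs)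
    from poly_pderiv_root_unity_factor[OF Pfg_c this wn n]
    have n_eq: "of_nat n = poly (of_int_poly (pderiv g)) w * w * poly (of_int_poly f) w"
      by (simp add: of_int_hom.map_poly_pderiv mult_ac)
    have "dvd_in_adjoin l z (poly (of_int_poly f) w)"
      using dvd_in_adjoin_poly_power_prime[OF l(1) int_adjoin_self[of z], where G = f] f_root
        prime_gt_0_nat[OF l(1)]
      by (simp add: w_def zero_power)
    moreover have "poly (of_int_poly (pderiv g)) w * w \<in> int_adjoin z" unfolding w_def by auto
    ultimately have "dvd_in_adjoin l z (of_nat n)" unfolding n_eq by (rule dvd_in_adjoin_mult)
    hence "l dvd n" by (rule dvd_in_adjoin_of_nat_imp_dvd[OF zn n prime_gt_0_nat[OF l(1)]])
    with l(2) show False ..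
  qed
  moreover obtain h where "F = f * h" using f_dvd[OF F] by (elim dvdE)
  ultimately show ?thesis by (simp add: w_def hom_distribs)
qed

lemma int_poly_root_unity_power_coprime:
  fixes z :: complex
  assumes zn: "z ^ n = 1" and n: "n > 0" and F: "poly (of_int_poly F) z = 0"
  shows "coprime k n \<Longrightarrow> poly (of_int_poly F) (z ^ k) = 0"
proof (induction k rule: less_induct)
  case (less k)
  consider "k = 0" | "k = 1" | "k > 1" by linarith
  thus ?case
  proof cases
    case 1
    hence "z = 1" using less.prems zn by simp
    thus ?thesis using F 1 by simp
  next
    case 2 thus ?thesis using F by simp
  next
    case 3
    obtain l k' where l: "prime l" and k': "k = l * k'"
      using prime_factor_nat[of k] 3 by (auto elim!: dvdE)
    have "k' > 0" using 3 k' by (cases k') auto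
    hence "k' < k" using prime_gt_1_nat[OF l] unfolding k' by (simp add: n_less_m_mult_n)
    moreover have "coprime k' n" using less.prems k' by simp
    ultimately have "poly (of_int_poly F) (z ^ k') = 0" using less.IH by blast
    moreover have "\<not> l dvd n"
      using less.prems k' l by (metis coprime_common_divisor dvd_triv_left not_prime_unit)
    moreover have "(z ^ k') ^ n = 1" using zn by (metis power_mult mult.commute power_one)
    ultimately show ?thesis
      using int_poly_root_unity_power_prime[OF _ n l] by (simp add: k' power_mult mult.commute)
  qed
qed

section \<open>Ramanujan sums and the fibre count identity\<close>

lemma multiples_below_product: "(a :: nat) > 0 \<Longrightarrow> {k. k < a * b \<and> a dvd k} = (\<lambda>j. a * j) ` {..<b}"
  by (auto simp: image_iff elim!: dvdE)

lemma sum_root_unity_multiples: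
  fixes w :: complex
  assumes w: "\<And>k. w ^ k = 1 \<longleftrightarrow> a * b dvd k" and a: "a > 0"
  shows "(\<Sum>k | k < a * b \<and> a dvd k. w ^ (k * d)) = (if b dvd d then of_nat b else 0)"
proof -
  have "(\<Sum>k | k < a * b \<and> a dvd k. w ^ (k * d)) = (\<Sum>j<b. w ^ (a * j * d))"
    unfolding multiples_below_product[OF a] using a by (subst sum.reindex) (auto simp: inj_on_def)
  also have "\<dots> = (\<Sum>j<b. (w ^ (a * d)) ^ j)" by (simp only: power_mult[symmetric] mult_ac)
  also have "\<dots> = (if w ^ (a * d) = 1 then of_nat b else 0)"
  proof -
    have "(w ^ (a * d)) ^ b = 1" using w by (simp flip: power_mult)
    thus ?thesis by (simp add: sum_gp_strict)
  qed
  also have "w ^ (a * d) = 1 \<longleftrightarrow> b dvd d" using w a by simp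
  finally show ?thesis .
qed

lemma coprime_prime_iff_not_dvd: "prime (p :: nat) \<Longrightarrow> coprime k p \<longleftrightarrow> \<not> p dvd k"
  by (meson coprime_commute not_prime_unit prime_imp_coprime coprime_common_divisor dvd_refl)

lemma ramanujan_sum_semiprime:
  fixes w :: complex
  assumes p: "prime p" and q: "prime q" and pq: "p \<noteq> q"
    and w: "\<And>k. w ^ k = 1 \<longleftrightarrow> p * q dvd k"
  shows "(\<Sum>k | k < p * q \<and> coprime k (p * q). w ^ (k * d)) =
    of_nat (p * q) * (if p * q dvd d then 1 else 0) - of_nat q * (if q dvd d then 1 else 0)
      - of_nat p * (if p dvd d then 1 else 0) + 1"
proof -
  define U where "U = {k. k < p * q \<and> coprime k (p * q)}"
  define Bp where "Bp = {k. k < p * q \<and> p dvd k}"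
  define Bq where "Bq = {k. k < q * p \<and> q dvd k}"
  let ?f = "\<lambda>k. w ^ (k * d)"
  have p0: "p > 0" and q0: "q > 0" using p q by (simp_all add: prime_gt_0_nat)
  have coprime_iff: "coprime k (p * q) \<longleftrightarrow> \<not> p dvd k \<and> \<not> q dvd k" for k
    using coprime_prime_iff_not_dvd[OF p] coprime_prime_iff_not_dvd[OF q] by simp
  have "{..<p * q} = U \<union> (Bp \<union> Bq)" and "U \<inter> (Bp \<union> Bq) = {}"
    by (auto simp: U_def Bp_def Bq_def coprime_iff mult.commute simp del: coprime_mult_right_iff)
  hence "(\<Sum>k<p * q. ?f k) = sum ?f U + sum ?f (Bp \<union> Bq)"
    by (simp add: sum.union_disjoint U_def Bp_def Bq_def)
  moreover have "sum ?f (Bp \<union> Bq) = sum ?f Bp + sum ?f Bq - sum ?f (Bp \<inter> Bq)"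
    by (simp add: sum_Un Bp_def Bq_def)
  moreover have "Bp \<inter> Bq = {0}"
  proof -
    have "k = 0" if "k < p * q" "p dvd k" "q dvd k" for k
    proof -
      have "p * q dvd k" using that p q pq by (simp add: divides_mult primes_coprime)
      thus ?thesis using that(1) by (metis dvd_imp_le not_less neq0_conv)
    qed
    thus ?thesis using p0 q0 by (auto simp: Bp_def Bq_def mult.commute)
  qed
  moreover have "(\<Sum>k<p * q. ?f k) = of_nat (p * q) * (if p * q dvd d then 1 else 0)"
    using sum_root_unity_multiples[of w 1 "p * q" d] w by (simp add: lessThan_def)
  moreover have "sum ?f Bp = of_nat q * (if q dvd d then 1 else 0)"
    using sum_root_unity_multiples[of w p q d] w p0 by (simp add: Bp_def)
  moreover have "w ^ k = 1 \<longleftrightarrow> q * p dvd k" for k using w by (simp add: mult.commute)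
  hence "sum ?f Bq = of_nat p * (if p dvd d then 1 else 0)"
    using sum_root_unity_multiples[of w q p d] q0 by (simp add: Bq_def)
  ultimately show ?thesis by (simp add: U_def algebra_simps)
qed

lemma vanishing_sum_root_unity_power_coprime:
  fixes w :: complex and L :: "'a \<Rightarrow> nat"
  assumes "w ^ n = 1" "n > 0" "(\<Sum>k\<in>A. w ^ L k) = 0" "coprime t n"
  shows "(\<Sum>k\<in>A. (w ^ t) ^ L k) = 0"
proof -
  define F :: "int poly" where "F = (\<Sum>k\<in>A. Polynomial.monom 1 (L k))"
  have F_eval: "poly (of_int_poly F) x = (\<Sum>k\<in>A. x ^ L k)" for x :: complex
    by (simp add: F_def hom_distribs poly_sum poly_monom map_poly_monom)
  show ?thesis
    using int_poly_root_unity_power_coprime[OF assms(1,2), of F t] assms(3,4) by (simp add: F_eval)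
qed

lemma dvd_add_diff_iff_mod_eq:
  fixes m n l b :: nat
  assumes "m dvd n" "b < n"
  shows "m dvd l + (n - b) \<longleftrightarrow> l mod m = b mod m"
proof -
  have "int (l + (n - b)) = (int l - int b) + int n" using assms(2) by simp
  hence "m dvd l + (n - b) \<longleftrightarrow> int m dvd int l - int b"
    using assms(1) by (metis dvd_add_left_iff int_dvd_int_iff)
  also have "\<dots> \<longleftrightarrow> int l mod int m = int b mod int m" by (simp add: mod_eq_dvd_iff)
  also have "\<dots> \<longleftrightarrow> l mod m = b mod m" by (simp flip: of_nat_mod)
  finally show ?thesis .
qed

lemma sum_if_eq_card: "(\<Sum>k<(N :: nat). if P k then c else 0) = of_nat (card {k. k < N \<and> P k}) * c"
proof -
  have "(\<Sum>k<N. if P k then c else 0) = sum (\<lambda>_. c) {k \<in> {..<N}. P k}"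
    by (rule sum.inter_filter[symmetric]) simp
  also have "{k \<in> {..<N}. P k} = {k. k < N \<and> P k}" by auto
  finally show ?thesis by simp
qed

text \<open>Weight the vanishing sums at the conjugates \<open>w\<^sup>t\<close> by \<open>w\<^bsup>-tb\<^esup>\<close> (exponent \<open>n - b\<close>) and sum over
  the units \<open>t\<close>: the inner sums are Ramanujan sums.\<close>
lemma fibre_count_identity:
  fixes w :: complex and L :: "nat \<Rightarrow> nat"
  assumes p: "prime p" and q: "prime q" and pq: "p \<noteq> q"
    and w: "\<And>k. w ^ k = 1 \<longleftrightarrow> p * q dvd k"
    and L: "\<And>k. k < N \<Longrightarrow> L k < p * q" and van: "(\<Sum>k<N. w ^ L k) = 0" and b: "b < p * q"
  shows "int (p * q) * int (card {k. k < N \<and> L k = b}) + int N =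
    int q * int (card {k. k < N \<and> L k mod q = b mod q}) + int p * int (card {k. k < N \<and> L k mod p = b mod p})"
proof -
  define n where "n = p * q"
  define U where "U = {t. t < n \<and> coprime t n}"
  have "n > 0" using p q by (simp add: n_def prime_gt_0_nat)
  have wn: "w ^ n = 1" using w by (simp add: n_def)
  define R where "R d = (of_nat n * (if n dvd d then 1 else 0) - of_nat q * (if q dvd d then 1 else 0)
      - of_nat p * (if p dvd d then 1 else 0) + 1 :: complex)" for d
  have R_shift: "R (L k + (n - b)) = (if L k = b then of_nat n else 0)
      - (if L k mod q = b mod q then of_nat q else 0) - (if L k mod p = b mod p then of_nat p else 0) + 1"
    if "k < N" for k
  proof -
    have "n dvd L k + (n - b) \<longleftrightarrow> L k = b"
      using dvd_add_diff_iff_mod_eq[of n n b "L k"] b L[OF that] by (simp add: n_def)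
    moreover have "q dvd L k + (n - b) \<longleftrightarrow> L k mod q = b mod q"
      using dvd_add_diff_iff_mod_eq[of q n b "L k"] b by (simp add: n_def)
    moreover have "p dvd L k + (n - b) \<longleftrightarrow> L k mod p = b mod p"
      using dvd_add_diff_iff_mod_eq[of p n b "L k"] b by (simp add: n_def)
    ultimately show ?thesis unfolding R_def by simp
  qed
  have "0 = (\<Sum>t\<in>U. w ^ (t * (n - b)) * (\<Sum>k<N. (w ^ t) ^ L k))"
    using vanishing_sum_root_unity_power_coprime[OF wn \<open>n > 0\<close> van] by (simp add: U_def)
  also have "\<dots> = (\<Sum>k<N. \<Sum>t\<in>U. w ^ (t * (L k + (n - b))))"
    by (subst sum.swap) (simp add: sum_distrib_left distrib_left power_add mult_ac flip: power_mult)
  also have "\<dots> = (\<Sum>k<N. R (L k + (n - b)))"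
    unfolding U_def n_def R_def by (rule sum.cong[OF refl], rule ramanujan_sum_semiprime[OF p q pq w])
  also have "\<dots> = (\<Sum>k<N. (if L k = b then of_nat n else 0) - (if L k mod q = b mod q then of_nat q else 0)
       - (if L k mod p = b mod p then of_nat p else 0) + 1)"
    by (rule sum.cong) (simp_all add: R_shift)
  also have "\<dots> = of_int (int n * int (card {k. k < N \<and> L k = b}) + int N
      - int q * int (card {k. k < N \<and> L k mod q = b mod q})
      - int p * int (card {k. k < N \<and> L k mod p = b mod p}))"
    by (simp add: sum.distrib sum_subtractf sum_if_eq_card algebra_simps)
  finally show ?thesis unfolding n_def by (simp only: of_int_eq_0_iff eq_commute[of 0])
qed

lemma counts_concentrated_of_cong_one:
  fixes C :: "nat \<Rightarrow> nat"
  assumes p: "p > 1" and cong: "\<And>y. y < q \<Longrightarrow> [C y = 1] (mod p)" and sum: "(\<Sum>y<q. C y) = q + p"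
  obtains y0 where "y0 < q" "\<And>y. y < q \<Longrightarrow> C y = (if y = y0 then p + 1 else 1)"
proof -
  define a where "a y = (C y - 1) div p" for y
  have Ca: "C y = 1 + p * a y" if "y < q" for y
  proof -
    have "C y \<noteq> 0" using cong[OF that] p by (cases "C y") (auto simp: cong_def)
    hence "p dvd C y - 1" using cong[OF that] by (simp add: cong_altdef_nat)
    thus ?thesis using \<open>C y \<noteq> 0\<close> by (simp add: a_def)
  qed
  have "(\<Sum>y<q. C y) = (\<Sum>y<q. 1 + p * a y)" by (rule sum.cong) (simp_all add: Ca)
  also have "\<dots> = q + p * (\<Sum>y<q. a y)" by (simp only: sum.distrib sum_distrib_left) simp
  finally have "(\<Sum>y<q. a y) = 1" using sum p by simp
  then obtain y0 where "y0 < q" and "a y0 = 1" and "\<And>y. y < q \<Longrightarrow> y \<noteq> y0 \<Longrightarrow> a y = 0"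
    by (auto simp: sum_eq_Suc0_iff)
  with Ca show ?thesis by (intro that[of y0]) auto
qed

lemma residue_counts_of_weighted_identity:
  fixes C D E :: "nat \<Rightarrow> nat"
  assumes p: "p > 1" and pq: "coprime q p" and sum: "(\<Sum>y<q. C y) = q + p"
    and ident: "\<And>y. y < q \<Longrightarrow> q * C y + p * D y = q + p * E y"
  obtains y0 where "y0 < q" "\<And>y. y < q \<Longrightarrow> C y = (if y = y0 then p + 1 else 1)"
proof (rule counts_concentrated_of_cong_one[OF p _ sum that])
  fix y assume "y < q"
  have "[q * C y + p * D y = q + p * E y] (mod p)" using ident[OF \<open>y < q\<close>] by simp
  hence "[q * C y = q * 1] (mod p)" by (simp add: cong_def)
  thus "[C y = 1] (mod p)" by (rule iffD1[OF cong_mult_lcancel_nat[OF pq]])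
qed

text \<open>The classes mod \<open>q\<close> and mod \<open>p\<close> carrying the extra \<open>p\<close>, resp. \<open>q\<close>, elements meet in the point
  \<open>r\<close> of the Chinese remainder theorem.\<close>
lemma fibre_counts_of_identity:
  fixes c Cq Cp :: "nat \<Rightarrow> nat"
  assumes p: "prime p" and q: "prime q" and pq: "p \<noteq> q"
    and ident: "\<And>b. b < p * q \<Longrightarrow>
      int (p * q) * int (c b) + int (p + q) = int q * int (Cq (b mod q)) + int p * int (Cp (b mod p))"
    and sum_q: "(\<Sum>y<q. Cq y) = p + q" and sum_p: "(\<Sum>x<p. Cp x) = p + q"
  obtains r where "r < p * q"
    "\<And>b. b < p * q \<Longrightarrow> c b = (if b mod q = r mod q then 1 else 0) + (if b mod p = r mod p then 1 else 0)"
proof -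
  have p1: "p > 1" using p by (rule prime_gt_1_nat)
  have q1: "q > 1" using q by (rule prime_gt_1_nat)
  have cop: "coprime q p" and cop': "coprime p q" using p q pq by (simp_all add: primes_coprime)
  have ident_nat: "q * Cq (b mod q) + p * Cp (b mod p) = p * q * c b + p + q" if "b < p * q" for b
    using ident[OF that] by (simp flip: of_nat_mult of_nat_add)
  have below: "y < p * q" if "y < q" for y using that p1 by (simp add: less_le_trans)
  have sum_q': "(\<Sum>y<q. Cq y) = q + p" using sum_q by simp
  have ident_q: "q * Cq y + p * Cp (y mod p) = q + p * (q * c y + 1)" if "y < q" for y
    using ident_nat[OF below[OF that]] that by (simp add: algebra_simps)
  obtain y0 where "y0 < q" and Cq: "\<And>y. y < q \<Longrightarrow> Cq y = (if y = y0 then p + 1 else 1)"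
    using residue_counts_of_weighted_identity[OF p1 cop sum_q' ident_q] by blast
  have ident_p: "p * Cp x + q * Cq (x mod q) = p + q * (p * c x + 1)" if "x < p" for x
    using ident_nat[of x] that q1 by (simp add: algebra_simps less_le_trans)
  obtain x0 where "x0 < p" and Cp: "\<And>x. x < p \<Longrightarrow> Cp x = (if x = x0 then q + 1 else 1)"
    using residue_counts_of_weighted_identity[OF q1 cop' sum_p ident_p] by blast
  obtain r0 where r0: "[r0 = y0] (mod q)" "[r0 = x0] (mod p)"
    using binary_chinese_remainder_nat[OF cop] by blast
  define r where "r = r0 mod (p * q)"
  have "r < p * q" using p1 q1 by (simp add: r_def)
  moreover have "r mod q = y0" and "r mod p = x0"
    using r0 \<open>y0 < q\<close> \<open>x0 < p\<close> by (simp_all add: r_def cong_def mod_mod_cancel)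
  moreover have "c b = (if b mod q = y0 then 1 else 0) + (if b mod p = x0 then 1 else 0)"
    if "b < p * q" for b
  proof -
    have "p * q * c b = p * q * ((if b mod q = y0 then 1 else 0) + (if b mod p = x0 then 1 else 0))"
      using ident_nat[OF that] Cq[of "b mod q"] Cp[of "b mod p"] p1 q1 by (auto simp: algebra_simps)
    thus ?thesis using p1 q1 by simp
  qed
  ultimately show ?thesis by (intro that) auto
qed

lemma sum_card_fibres:
  fixes g :: "nat \<Rightarrow> nat"
  assumes "\<And>k. k < N \<Longrightarrow> g k < M"
  shows "(\<Sum>y<M. card {k. k < N \<and> g k = y}) = N"
proof -
  have "(\<Sum>y\<in>{..<M}. sum (\<lambda>_. 1::nat) {x \<in> {..<N}. g x = y}) = sum (\<lambda>_. 1) {..<N}"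
    by (rule sum.group) (use assms in auto)
  moreover have "{x \<in> {..<N}. g x = y} = {k. k < N \<and> g k = y}" for y by auto
  ultimately show ?thesis by simp
qed

lemma vanishing_sum_fibre_counts:
  fixes w :: complex and L :: "nat \<Rightarrow> nat"
  assumes p: "prime p" and q: "prime q" and pq: "p \<noteq> q"
    and w: "\<And>k. w ^ k = 1 \<longleftrightarrow> p * q dvd k"
    and L: "\<And>k. k < p + q \<Longrightarrow> L k < p * q" and van: "(\<Sum>k<p + q. w ^ L k) = 0"
  obtains r where "r < p * q"
    "\<And>b. b < p * q \<Longrightarrow> card {k \<in> {..<p + q}. L k = b} =
       (if b mod q = r mod q then 1 else 0) + (if b mod p = r mod p then 1 else 0)"
proof (rule fibre_counts_of_identity[OF p q pq])
  have "{k \<in> {..<p + q}. L k = b} = {k. k < p + q \<and> L k = b}" for b by auto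
  thus "int (p * q) * int (card {k \<in> {..<p + q}. L k = b}) + int (p + q) =
    int q * int (card {k. k < p + q \<and> L k mod q = b mod q}) + int p * int (card {k. k < p + q \<and> L k mod p = b mod p})"
    if "b < p * q" for b
    using fibre_count_identity[OF p q pq w L van that] by simp
  show "(\<Sum>y<q. card {k. k < p + q \<and> L k mod q = y}) = p + q"
    using q by (intro sum_card_fibres) (simp add: prime_gt_0_nat)
  show "(\<Sum>x<p. card {k. k < p + q \<and> L k mod p = x}) = p + q"
    using p by (intro sum_card_fibres) (simp add: prime_gt_0_nat)
qed (rule that)

lemma card_residue_class_below_mult:
  fixes p q y :: nat
  assumes "y < q"
  shows "card {b. b < p * q \<and> b mod q = y} = p"
proof -
  have "{b. b < p * q \<and> b mod q = y} = (\<lambda>t. y + q * t) ` {..<p}"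
  proof (rule subset_antisym; rule subsetI)
    fix b assume b: "b \<in> {b. b < p * q \<and> b mod q = y}"
    hence "b = y + q * (b div q)" using mod_mult_div_eq[of b q] by simp
    moreover have "b div q < p" by (rule less_mult_imp_div_less) (use b in simp)
    ultimately show "b \<in> (\<lambda>t. y + q * t) ` {..<p}" by blast
  next
    fix b assume "b \<in> (\<lambda>t. y + q * t) ` {..<p}"
    then obtain t where t: "t < p" "b = y + q * t" by auto
    have "y + q * t < q * (t + 1)" using assms by simp
    also have "\<dots> \<le> q * p" using t(1) by (intro mult_le_mono2) simp
    finally show "b \<in> {b. b < p * q \<and> b mod q = y}" using t assms by (simp add: mult.commute)
  qed
  moreover have "inj_on (\<lambda>t. y + q * t) {..<p}" using assms by (auto simp: inj_on_def)
  ultimately show ?thesis by (simp add: card_image)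
qed

lemma singleton_fibres_preimage:
  assumes fibres: "\<And>b. b \<in> S \<Longrightarrow> card {k \<in> A. L k = b} = 1"
  shows "L ` {k \<in> A. L k \<in> S} = S" and "card {k \<in> A. L k \<in> S} = card S"
proof -
  have fibre: "\<exists>k0. {k \<in> A. L k = b} = {k0}" if "b \<in> S" for b
    using fibres[OF that] by (rule card_1_singletonE) blast
  show image: "L ` {k \<in> A. L k \<in> S} = S"
  proof
    show "S \<subseteq> L ` {k \<in> A. L k \<in> S}"
    proof
      fix b assume "b \<in> S"
      then obtain k0 where "{k \<in> A. L k = b} = {k0}" using fibre by blast
      hence "k0 \<in> A" "L k0 = b" by auto
      with \<open>b \<in> S\<close> show "b \<in> L ` {k \<in> A. L k \<in> S}" by blast
    qed
  qed auto
  have "inj_on L {k \<in> A. L k \<in> S}"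
  proof (rule inj_onI)
    fix k1 k2 assume "k1 \<in> {k \<in> A. L k \<in> S}" "k2 \<in> {k \<in> A. L k \<in> S}" "L k1 = L k2"
    moreover obtain k0 where "{k \<in> A. L k = L k1} = {k0}" using calculation fibre by blast
    ultimately show "k1 = k2" by (metis (mono_tags, lifting) mem_Collect_eq singletonD)
  qed
  thus "card {k \<in> A. L k \<in> S} = card S" using image card_image by metis
qed

lemma eq_of_mod_eq_coprime_factors:
  fixes b r p q :: nat
  assumes "coprime p q" "b < p * q" "r < p * q" "b mod p = r mod p" "b mod q = r mod q"
  shows "b = r"
proof -
  have "[b = r] (mod p * q)"
    using assms by (intro coprime_cong_mult_nat) (simp_all add: cong_def)
  thus ?thesis using assms(2,3) by (rule cong_less_modulus_unique_nat)
qed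

lemma coset_mult_of_nat:
  assumes "d dvd n" and "r < n"
  shows "coset_mult n d (int r) = int ` {b. b < n \<and> b mod d = r mod d}"
proof
  show "coset_mult n d (int r) \<subseteq> int ` {b. b < n \<and> b mod d = r mod d}"
  proof
    fix a assume "a \<in> coset_mult n d (int r)"
    then obtain t where a: "a = (int r + int d * t) mod int n" unfolding coset_mult_def by auto
    have "0 \<le> a" "a < int n" using assms(2) a by simp_all
    have "int (nat a mod d) = a mod int d" using \<open>0 \<le> a\<close> by (simp add: of_nat_mod)
    also have "\<dots> = (int r + int d * t) mod int d" unfolding a using assms(1) by (simp add: mod_mod_cancel)
    also have "\<dots> = int (r mod d)" by (simp add: of_nat_mod)
    finally have "nat a mod d = r mod d" by (simp only: of_nat_eq_iff)
    with \<open>0 \<le> a\<close> \<open>a < int n\<close> show "a \<in> int ` {b. b < n \<and> b mod d = r mod d}"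
      by (intro image_eqI[of _ _ "nat a"]) auto
  qed
  show "int ` {b. b < n \<and> b mod d = r mod d} \<subseteq> coset_mult n d (int r)"
  proof
    fix a assume "a \<in> int ` {b. b < n \<and> b mod d = r mod d}"
    then obtain b where b: "a = int b" "b < n" "b mod d = r mod d" by auto
    hence "int b mod int d = int r mod int d" by (metis of_nat_mod)
    hence "int d dvd int b - int r" by (simp add: mod_eq_dvd_iff)
    then obtain t where "int b = int r + int d * t" by (metis add.commute diff_add_cancel dvdE)
    hence "a = (int r + int d * t) mod int n" using b by simp
    thus "a \<in> coset_mult n d (int r)" unfolding coset_mult_def by blast
  qed
qed

lemma preimage_residue_class_of_fibre_counts:
  fixes L :: "'a \<Rightarrow> nat"
  assumes "coprime p q" and "q > 0" and r: "r < p * q"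
    and fibres: "\<And>b. b < p * q \<Longrightarrow> card {k \<in> A. L k = b} =
       (if b mod q = r mod q then 1 else 0) + (if b mod p = r mod p then 1 else 0)"
    and S: "S = {b. b < p * q \<and> b mod q = r mod q} - {r}"
  shows "L ` {k \<in> A. L k \<in> S} = S" and "card {k \<in> A. L k \<in> S} = p - 1"
proof -
  have fib: "card {k \<in> A. L k = b} = 1" if "b \<in> S" for b
    using fibres[of b] eq_of_mod_eq_coprime_factors[OF assms(1), of b r] that r by (auto simp: S)
  thus "L ` {k \<in> A. L k \<in> S} = S" by (rule singleton_fibres_preimage(1))
  have "card S = p - 1"
    using card_residue_class_below_mult[of "r mod q" q p] \<open>q > 0\<close> r by (simp add: S card_Diff_singleton)
  moreover have "card {k \<in> A. L k \<in> S} = card S" using fib by (rule singleton_fibres_preimage(2))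
  ultimately show "card {k \<in> A. L k \<in> S} = p - 1" by simp
qed

lemma partition_of_fibre_counts:
  fixes L :: "'a \<Rightarrow> nat"
  assumes p: "prime p" and q: "prime q" and pq: "p \<noteq> q" and r: "r < p * q"
    and "finite A" and L: "\<And>k. k \<in> A \<Longrightarrow> L k < p * q"
    and fibres: "\<And>b. b < p * q \<Longrightarrow> card {k \<in> A. L k = b} =
       (if b mod q = r mod q then 1 else 0) + (if b mod p = r mod p then 1 else 0)"
  obtains P Q R where "P \<union> Q \<union> R = A" "P \<inter> Q = {}" "P \<inter> R = {}" "Q \<inter> R = {}"
    "card R = 2" "\<forall>k\<in>R. L k = r"
    "card P = p - 1" "L ` P = {b. b < p * q \<and> b mod q = r mod q} - {r}"
    "card Q = q - 1" "L ` Q = {b. b < p * q \<and> b mod p = r mod p} - {r}"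
proof -
  define Sq where "Sq = {b. b < p * q \<and> b mod q = r mod q} - {r}"
  define Sp where "Sp = {b. b < p * q \<and> b mod p = r mod p} - {r}"
  define P where "P = {k \<in> A. L k \<in> Sq}"
  define Q where "Q = {k \<in> A. L k \<in> Sp}"
  define R where "R = {k \<in> A. L k = r}"
  have "coprime p q" and "p > 0" and "q > 0" using p q pq by (simp_all add: primes_coprime prime_gt_0_nat)
  have "A \<subseteq> P \<union> Q \<union> R"
  proof
    fix k assume "k \<in> A"
    hence "card {k' \<in> A. L k' = L k} \<noteq> 0" using \<open>finite A\<close> by (auto simp: card_eq_0_iff)
    hence "L k mod q = r mod q \<or> L k mod p = r mod p" using fibres[OF L[OF \<open>k \<in> A\<close>]] by (auto split: if_splits)
    thus "k \<in> P \<union> Q \<union> R" using \<open>k \<in> A\<close> L by (auto simp: P_def Q_def R_def Sq_def Sp_def)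
  qed
  hence union: "P \<union> Q \<union> R = A" by (auto simp: P_def Q_def R_def)
  have PQ: "P \<inter> Q = {}"
    using eq_of_mod_eq_coprime_factors[OF \<open>coprime p q\<close>] L r by (auto simp: P_def Q_def Sq_def Sp_def)
  have PR: "P \<inter> R = {}" and QR: "Q \<inter> R = {}" by (auto simp: P_def Q_def R_def Sq_def Sp_def)
  have R: "card R = 2" "\<forall>k\<in>R. L k = r" using fibres[OF r] by (simp_all add: R_def)
  note Sq_side = preimage_residue_class_of_fibre_counts[OF \<open>coprime p q\<close> \<open>q > 0\<close> r fibres Sq_def]
  have "L ` P = Sq" unfolding P_def using Sq_side(1) by simp
  moreover have "card P = p - 1" unfolding P_def using Sq_side(2) by simp
  moreover have fibres_qp: "card {k \<in> A. L k = b} =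
      (if b mod p = r mod p then 1 else 0) + (if b mod q = r mod q then 1 else 0)" if "b < q * p" for b
    using fibres[of b] that by (simp add: mult.commute)
  note Sp_side = preimage_residue_class_of_fibre_counts[OF _ \<open>p > 0\<close> _ fibres_qp, of Sp]
  have "L ` Q = Sp" unfolding Q_def using Sp_side(1) \<open>coprime p q\<close> r
    by (simp add: Sp_def coprime_commute mult.commute)
  moreover have "card Q = q - 1" unfolding Q_def using Sp_side(2) \<open>coprime p q\<close> r
    by (simp add: Sp_def coprime_commute mult.commute)
  ultimately show ?thesis
    using that[OF union PQ PR QR R] unfolding Sq_def Sp_def by blast
qed

lemma exists_partition_of_fibre_counts:
  fixes L :: "'a \<Rightarrow> nat"
  assumes p: "prime p" and q: "prime q" and pq: "p \<noteq> q" and r: "r < p * q"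
    and "finite A" and L: "\<And>k. k \<in> A \<Longrightarrow> L k < p * q"
    and fibres: "\<And>b. b < p * q \<Longrightarrow> card {k \<in> A. L k = b} =
       (if b mod q = r mod q then 1 else 0) + (if b mod p = r mod p then 1 else 0)"
  shows "\<exists>P Q R r. P \<union> Q \<union> R = A \<and> P \<inter> Q = {} \<and> P \<inter> R = {} \<and> Q \<inter> R = {} \<and>
       r \<in> {0..<int (p * q)} \<and>
       card R = 2 \<and> (\<forall>k\<in>R. int (L k) = r) \<and>
       card P = p - 1 \<and> (\<lambda>k. int (L k)) ` P = coset_mult (p * q) q r - {r} \<and>
       card Q = q - 1 \<and> (\<lambda>k. int (L k)) ` Q = coset_mult (p * q) p r - {r}"
proof -
  obtain P Q R where parts: "P \<union> Q \<union> R = A" "P \<inter> Q = {}" "P \<inter> R = {}" "Q \<inter> R = {}"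
    "card R = 2" "\<forall>k\<in>R. L k = r"
    "card P = p - 1" "L ` P = {b. b < p * q \<and> b mod q = r mod q} - {r}"
    "card Q = q - 1" "L ` Q = {b. b < p * q \<and> b mod p = r mod p} - {r}"
    using partition_of_fibre_counts[where L = L, OF p q pq r \<open>finite A\<close> L fibres] by blast
  have "coset_mult (p * q) q (int r) - {int r} = int ` ({b. b < p * q \<and> b mod q = r mod q} - {r})"
    "coset_mult (p * q) p (int r) - {int r} = int ` ({b. b < p * q \<and> b mod p = r mod p} - {r})"
    using r by (simp_all add: coset_mult_of_nat image_set_diff)
  moreover have "int r < int p * int q" using r by (simp flip: of_nat_mult)
  ultimately show ?thesis using parts
    by (intro exI[of _ P] exI[of _ Q] exI[of _ R] exI[of _ "int r"]) (simp flip: image_image[of int L])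
qed


lemma cnj_exp_root_unity_power_eq_1_iff:
  assumes "n > 0"
  shows "cnj (exp (2 * of_real pi * \<i> / of_nat n)) ^ k = 1 \<longleftrightarrow> n dvd k"
proof -
  have "cnj (exp (2 * of_real pi * \<i> / of_nat n)) ^ k = cnj (exp (2 * of_real pi * \<i> / of_nat n) ^ k)"
    by simp
  also have "exp (2 * of_real pi * \<i> / of_nat n) ^ k = exp (2 * of_real pi * \<i> * of_nat k / of_nat n)"
    by (subst exp_of_nat_mult[symmetric]) (simp add: mult_ac)
  finally have "cnj (exp (2 * of_real pi * \<i> / of_nat n)) ^ k = 1 \<longleftrightarrow>
      exp (2 * of_real pi * \<i> * of_nat k / of_nat n) = 1"
    by (metis complex_cnj_one complex_cnj_cnj)
  also have "\<dots> \<longleftrightarrow> n dvd k" using assms by (intro complex_root_unity_eq_1) simp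
  finally show ?thesis .
qed

lemma exp_mult_cnj_exp_eq_power:
  assumes n: "n > 0"
  shows "exp (2 * of_real pi * \<i> * of_int a / of_nat n) * cnj (exp (2 * of_real pi * \<i> * of_int b / of_nat n)) =
    cnj (exp (2 * of_real pi * \<i> / of_nat n)) ^ nat ((b - a) mod int n)"
proof -
  define l where "l = (b - a) mod int n"
  define t where "t = (b - a) div int n"
  have l0: "l \<ge> 0" using n by (simp add: l_def)
  have ba: "b - a = int n * t + l" by (simp add: l_def t_def)
  have nc: "(of_nat n :: complex) \<noteq> 0" using n by simp
  have "cnj (exp (2 * of_real pi * \<i> / of_nat n)) ^ nat l = cnj (exp (2 * of_real pi * \<i> / of_nat n) ^ nat l)"
    by simp
  also have "exp (2 * of_real pi * \<i> / of_nat n) ^ nat l = exp (of_nat (nat l) * (2 * of_real pi * \<i> / of_nat n))"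
    by (rule exp_of_nat_mult[symmetric])
  also have "cnj \<dots> = exp (- (2 * of_real pi * \<i> * of_int l / of_nat n))"
    using l0 by (simp add: exp_cnj mult_ac)
  finally have power_eq: "cnj (exp (2 * of_real pi * \<i> / of_nat n)) ^ nat l = exp (- (2 * of_real pi * \<i> * of_int l / of_nat n))" .
  have "exp (2 * of_real pi * \<i> * of_int a / of_nat n) * cnj (exp (2 * of_real pi * \<i> * of_int b / of_nat n))
      = exp (2 * of_real pi * \<i> * of_int a / of_nat n + (- (2 * of_real pi * \<i> * of_int b / of_nat n)))"
    by (simp add: exp_cnj exp_add[symmetric] del: exp_add)
  also have "\<dots> = exp (- (2 * of_real pi * \<i> * of_int l / of_nat n))"
  proof (subst exp_eq, rule exI[of _ "- t"])
    have "of_int b = (of_int a + of_nat n * of_int t + of_int l :: complex)"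
      using arg_cong[OF ba, of "of_int :: int \<Rightarrow> complex"] by (simp add: algebra_simps)
    thus "2 * of_real pi * \<i> * of_int a / of_nat n + - (2 * of_real pi * \<i> * of_int b / of_nat n) =
      - (2 * of_real pi * \<i> * of_int l / of_nat n) + complex_of_real (real_of_int (2 * - t) * pi) * \<i>"
      using nc by (simp add: field_simps)
  qed
  finally show ?thesis using power_eq by (simp add: l_def)
qed

lemma exp_matrix_rows_vanishing_sum:
  assumes n: "n > 0" and H: "complex_hadamard N (exp_matrix n m)" and "i < N" "j < N" "i \<noteq> j"
  shows "(\<Sum>k<N. cnj (exp (2 * of_real pi * \<i> / of_nat n)) ^ nat (Ldiff n m i j k)) = 0"
proof -
  have "exp_matrix n m i k * cnj (exp_matrix n m j k) =
      cnj (exp (2 * of_real pi * \<i> / of_nat n)) ^ nat (Ldiff n m i j k)" for k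
    unfolding exp_matrix_def Ldiff_def by (rule exp_mult_cnj_exp_eq_power[OF n])
  moreover have "(\<Sum>k<N. exp_matrix n m i k * cnj (exp_matrix n m j k)) = 0"
    using H assms(3-5) unfolding complex_hadamard_def by blast
  ultimately show ?thesis by simp
qed

theorem lemma6p1:
  fixes p q :: nat and m :: "nat \<Rightarrow> nat \<Rightarrow> int"
  assumes "prime p" and "prime q" and "p \<noteq> q"
    and "zmod_matrix (p + q) (p * q) m"
    and "complex_hadamard (p + q) (exp_matrix (p * q) m)"
  shows "\<forall>i<p + q. \<forall>j<p + q. i \<noteq> j \<longrightarrow>
    (\<exists>P Q R r. P \<union> Q \<union> R = {..<p + q} \<and> P \<inter> Q = {} \<and> P \<inter> R = {} \<and> Q \<inter> R = {} \<and>
       r \<in> {0..<int (p * q)} \<and>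
       card R = 2 \<and> (\<forall>k\<in>R. Ldiff (p * q) m i j k = r) \<and>
       card P = p - 1 \<and> Ldiff (p * q) m i j ` P = coset_mult (p * q) q r - {r} \<and>
       card Q = q - 1 \<and> Ldiff (p * q) m i j ` Q = coset_mult (p * q) p r - {r})"
proof (intro allI impI, goal_cases)
  case (1 i j)
  have "p * q > 0" using assms(1,2) by (simp add: prime_gt_0_nat)
  define L where "L k = nat (Ldiff (p * q) m i j k)" for k
  have Ldiff_L: "Ldiff (p * q) m i j = (\<lambda>k. int (L k))"
    using \<open>p * q > 0\<close> by (auto simp: L_def Ldiff_def)
  have L: "L k < p * q" for k
    using \<open>p * q > 0\<close> by (simp add: L_def Ldiff_def nat_less_iff)
  define w where "w = cnj (exp (2 * of_real pi * \<i> / of_nat (p * q)))"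
  have "w ^ k = 1 \<longleftrightarrow> p * q dvd k" for k
    unfolding w_def by (rule cnj_exp_root_unity_power_eq_1_iff[OF \<open>p * q > 0\<close>])
  moreover have "(\<Sum>k<p + q. w ^ L k) = 0"
    using exp_matrix_rows_vanishing_sum[OF \<open>p * q > 0\<close> assms(5) 1] unfolding w_def L_def .
  ultimately obtain r where "r < p * q" and fibres: "\<And>b. b < p * q \<Longrightarrow>
      card {k \<in> {..<p + q}. L k = b} = (if b mod q = r mod q then 1 else 0) + (if b mod p = r mod p then 1 else 0)"
    using vanishing_sum_fibre_counts[where L = L, OF assms(1-3) _ L] by blast
  show ?case
    unfolding Ldiff_L by (rule exists_partition_of_fibre_counts[where L = L, OF assms(1-3) \<open>r < p * q\<close> _ L fibres]) simp
qed

end
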